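(* Assume the setting in the context. For all $\boldsymbol\gamma\in(0,\infty)^n$ and $\gamma\in(0,2\beta)$, the composition $T_{1,\boldsymbol\gamma}T_{2,\gamma}$ is $\alpha$-averaged with $\alpha=\max\big(\tfrac23,\tfrac{2}{1+2\beta/\gamma}\big)$.
   Context: $\mathcal H$ is a real Hilbert space, $n\ge1$, $(\omega_i)_{i=1}^n\in(0,1)^n$ with $\sum_i\omega_i=1$; $A_1,\dots,A_n:\mathcal H\to2^{\mathcal H}$ are maximal monotone; $B:\mathcal H\to\mathcal H$ is single-valued and $\beta\in(0,\infty)$ is such that $\beta B$ is firmly nonexpansive. Resolvent $J_A=(\mathrm{Id}+A)^{-1}$, reflection $R_A=2J_A-\mathrm{Id}$. An operator $T$ is $\alpha$-averaged ($\alpha\in(0,1)$) if $T=(1-\alpha)\mathrm{Id}+\alpha R$ with $R$ nonexpansive; firmly nonexpansive means $\tfrac12$-averaged. Product space: $\boldsymbol{\mathcal H}=\mathcal H^n$ with inner product $\langle\!\langle\mathbf x,\mathbf y\rangle\!\rangle=\sum_i\omega_i\langle x_i,y_i\rangle$; $\mathbf S=\{\mathbf x: x_1=\dots=x_n\}$; $N_{\mathbf S}(\mathbf x)=\mathbf S^\perp$ if $\mathbf x\in\mathbf S$ and $\emptyset$ otherwise. For $\boldsymbol\gamma=(\gamma_i)\in(0,\infty)^n$, $\boldsymbol\gamma\mathbf A:\mathbf x\mapsto\prod_i\gamma_iA_i(x_i)$; $\mathbf B\mathbf x=(Bx_i)_i$. $T_{1,\boldsymbol\gamma}=\tfrac12[R_{\boldsymbol\gamma\mathbf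 A}R_{N_{\mathbf S}}+\mathrm{Id}]$, $T_{2,\gamma}=\mathrm{Id}-\gamma\mathbf BJ_{N_{\mathbf S}}$. *)

theory Defs
  imports "HOL-Analysis.Analysis"
begin

definition monotone_op :: "('a::real_inner \<Rightarrow> 'a set) \<Rightarrow> bool" where
  "monotone_op A \<longleftrightarrow> (\<forall>x y u v. u \<in> A x \<longrightarrow> v \<in> A y \<longrightarrow> inner (x - y) (u - v) \<ge> 0)"

definition maximal_monotone :: "('a::real_inner \<Rightarrow> 'a set) \<Rightarrow> bool" where
  "maximal_monotone A \<longleftrightarrow> monotone_op A \<and>
     (\<forall>B. monotone_op B \<and> (\<forall>x. A x \<subseteq> B x) \<longrightarrow> B = A)"

definition nonexpansive :: "('a::real_normed_vector \<Rightarrow> 'a) \<Rightarrow> bool" where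
  "nonexpansive R \<longleftrightarrow> (\<forall>x y. norm (R x - R y) \<le> norm (x - y))"

definition averaged :: "real \<Rightarrow> ('a::real_normed_vector \<Rightarrow> 'a) \<Rightarrow> bool" where
  "averaged \<alpha> T \<longleftrightarrow> 0 < \<alpha> \<and> \<alpha> < 1 \<and>
     (\<exists>R. nonexpansive R \<and> (\<forall>x. T x = (1 - \<alpha>) *\<^sub>R x + \<alpha> *\<^sub>R R x))"

definition firmly_nonexpansive :: "('a::real_normed_vector \<Rightarrow> 'a) \<Rightarrow> bool" where
  "firmly_nonexpansive T \<longleftrightarrow> averaged (1/2) T"

definition pinner :: "('i::finite \<Rightarrow> real) \<Rightarrow> ('i \<Rightarrow> 'a::real_inner) \<Rightarrow> ('i \<Rightarrow> 'a) \<Rightarrow> real" where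
  "pinner \<omega> x y = (\<Sum>i\<in>UNIV. \<omega> i * inner (x i) (y i))"

definition pnorm :: "('i::finite \<Rightarrow> real) \<Rightarrow> ('i \<Rightarrow> 'a::real_inner) \<Rightarrow> real" where
  "pnorm \<omega> x = sqrt (pinner \<omega> x x)"

definition pnonexpansive :: "('i::finite \<Rightarrow> real) \<Rightarrow> (('i \<Rightarrow> 'a::real_inner) \<Rightarrow> ('i \<Rightarrow> 'a)) \<Rightarrow> bool" where
  "pnonexpansive \<omega> R \<longleftrightarrow>
     (\<forall>x y. pnorm \<omega> (\<lambda>i. R x i - R y i) \<le> pnorm \<omega> (\<lambda>i. x i - y i))"

definition paveraged :: "('i::finite \<Rightarrow> real) \<Rightarrow> real \<Rightarrow> (('i \<Rightarrow> 'a::real_inner) \<Rightarrow> ('i \<Rightarrow> 'a)) \<Rightarrow> bool" where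
  "paveraged \<omega> \<alpha> T \<longleftrightarrow> 0 < \<alpha> \<and> \<alpha> < 1 \<and>
     (\<exists>R. pnonexpansive \<omega> R \<and> (\<forall>x. T x = (\<lambda>i. (1 - \<alpha>) *\<^sub>R x i + \<alpha> *\<^sub>R R x i)))"

definition presolvent :: "(('i \<Rightarrow> 'a::real_vector) \<Rightarrow> ('i \<Rightarrow> 'a) set) \<Rightarrow> ('i \<Rightarrow> 'a) \<Rightarrow> ('i \<Rightarrow> 'a)" where
  "presolvent A x = (THE p. (\<lambda>i. x i - p i) \<in> A p)"

definition preflection :: "(('i \<Rightarrow> 'a::real_vector) \<Rightarrow> ('i \<Rightarrow> 'a) set) \<Rightarrow> ('i \<Rightarrow> 'a) \<Rightarrow> ('i \<Rightarrow> 'a)" where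
  "preflection A x = (\<lambda>i. 2 *\<^sub>R presolvent A x i - x i)"

definition diagS :: "('i \<Rightarrow> 'a) set" where
  "diagS = {x. \<forall>i j. x i = x j}"

definition diagS_perp :: "('i::finite \<Rightarrow> real) \<Rightarrow> ('i \<Rightarrow> 'a::real_inner) set" where
  "diagS_perp \<omega> = {y. \<forall>x\<in>diagS. pinner \<omega> x y = 0}"

definition normal_cone_S :: "('i::finite \<Rightarrow> real) \<Rightarrow> ('i \<Rightarrow> 'a::real_inner) \<Rightarrow> ('i \<Rightarrow> 'a) set" where
  "normal_cone_S \<omega> x = (if x \<in> diagS then diagS_perp \<omega> else {})"

definition scaled_prod_op :: "('i \<Rightarrow> real) \<Rightarrow> ('i \<Rightarrow> 'a \<Rightarrow> 'a::real_vector set) \<Rightarrow> ('i \<Rightarrow> 'a) \<Rightarrow> ('i \<Rightarrow> 'a) set" where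
  "scaled_prod_op g A x = {u. \<forall>i. u i \<in> (\<lambda>v. g i *\<^sub>R v) ` A i (x i)}"

definition diag_op :: "('a \<Rightarrow> 'a) \<Rightarrow> ('i \<Rightarrow> 'a) \<Rightarrow> ('i \<Rightarrow> 'a)" where
  "diag_op B x = (\<lambda>i. B (x i))"

text \<open>T_{1,\<gamma>} = 1/2 (R_{\<gamma>A} R_{N_S} + Id) and T_{2,\<gamma>} = Id - \<gamma> B J_{N_S}.\<close>
definition T1 :: "('i::finite \<Rightarrow> real) \<Rightarrow> ('i \<Rightarrow> real) \<Rightarrow> ('i \<Rightarrow> 'a \<Rightarrow> 'a::real_inner set) \<Rightarrow> ('i \<Rightarrow> 'a) \<Rightarrow> ('i \<Rightarrow> 'a)" where
  "T1 \<omega> g A x = (\<lambda>i. (1/2) *\<^sub>R (preflection (scaled_prod_op g A) (preflection (normal_cone_S \<omega>) x) i + x i))"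

definition T2 :: "('i::finite \<Rightarrow> real) \<Rightarrow> real \<Rightarrow> ('a \<Rightarrow> 'a::real_inner) \<Rightarrow> ('i \<Rightarrow> 'a) \<Rightarrow> ('i \<Rightarrow> 'a)" where
  "T2 \<omega> \<gamma> B x = (\<lambda>i. x i - \<gamma> *\<^sub>R diag_op B (presolvent (normal_cone_S \<omega>) x) i)"

end

theory Submission
  imports Defs
begin

text \<open>
  The resolvents occurring in T1 must first be shown to exist.  This is Minty's theorem,
  proved via the Debrunner-Flor lemma: for finite monotone sets by maximising a concave
  function over a convex hull, for arbitrary ones by a finite intersection property of
  closed convex sets in a Hilbert space, itself proved with a minimal-norm Cauchy
  sequence.  Resolvents of maximal monotone operators are then firmly nonexpansive.

  The weighted product space is embedded isometrically into 'a^'i.  There T1 is firmly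
  nonexpansive (the reflection across the diagonal is an isometry and the resolvent
  reflections are nonexpansive), T2 satisfies an estimate coming from the cocoercivity
  of B, and an inequality valid in any inner product space combines the two estimates
  into the averagedness of the composition.
\<close>

definition monotone_set :: "('a::real_inner \<times> 'a) set \<Rightarrow> bool" where
  "monotone_set G \<longleftrightarrow> (\<forall>g\<in>G. \<forall>h\<in>G. 0 \<le> inner (fst g - fst h) (snd g - snd h))"

text \<open>The points x such that the pair (x, -x) is monotonically related to (a, b).\<close>

definition mono_related :: "'a::real_inner \<Rightarrow> 'a \<Rightarrow> 'a set" where
  "mono_related a b = {x. inner (x - a) (x + b) \<le> 0}"

text \<open>Completing the square shows that this set is a closed ball; hence it is closed,
  convex and bounded, which is what the compactness argument below needs.\<close>

lemma mono_related_cball: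
  "mono_related a b = cball ((1/2) *\<^sub>R (a - b)) (norm ((1/2) *\<^sub>R (a + b)))"
proof -
  have "inner (x - a) (x + b) \<le> 0 \<longleftrightarrow>
        inner ((1/2) *\<^sub>R (a - b) - x) ((1/2) *\<^sub>R (a - b) - x)
          \<le> inner ((1/2) *\<^sub>R (a + b)) ((1/2) *\<^sub>R (a + b))" for x
    by (simp add: inner_diff_left inner_diff_right inner_commute algebra_simps)
  then show ?thesis
    unfolding mono_related_def cball_def dist_norm norm_le by blast
qed

lemma monotone_family_convex_combination:
  fixes a b :: "'i \<Rightarrow> 'a::real_inner"
  assumes fin: "finite I"
    and mon: "\<And>i j. i \<in> I \<Longrightarrow> j \<in> I \<Longrightarrow> 0 \<le> inner (a i - a j) (b i - b j)"
    and nonneg: "\<And>i. i \<in> I \<Longrightarrow> 0 \<le> l i" and sum1: "sum l I = 1"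
  shows "inner (\<Sum>i\<in>I. l i *\<^sub>R a i) (\<Sum>i\<in>I. l i *\<^sub>R b i) \<le> (\<Sum>i\<in>I. l i * inner (a i) (b i))"
proof -
  have "0 \<le> (\<Sum>i\<in>I. \<Sum>j\<in>I. l i * l j * inner (a i - a j) (b i - b j))"
    using mon nonneg by (intro sum_nonneg) auto
  also have "\<dots> =
     (\<Sum>i\<in>I. \<Sum>j\<in>I. l i * l j * inner (a i) (b i))
     + (\<Sum>i\<in>I. \<Sum>j\<in>I. l i * l j * inner (a j) (b j))
     - (\<Sum>i\<in>I. \<Sum>j\<in>I. l i * l j * inner (a i) (b j))
     - (\<Sum>i\<in>I. \<Sum>j\<in>I. l i * l j * inner (a j) (b i))"
    by (simp add: inner_diff_left inner_diff_right algebra_simps sum_subtractf sum.distrib)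
  also have "(\<Sum>i\<in>I. \<Sum>j\<in>I. l i * l j * inner (a i) (b i)) = (\<Sum>i\<in>I. l i * inner (a i) (b i))"
    by (simp add: sum_distrib_left[symmetric] sum_distrib_right[symmetric] sum1
        mult.assoc mult.commute mult.left_commute)
  also have "(\<Sum>i\<in>I. \<Sum>j\<in>I. l i * l j * inner (a j) (b j)) = (\<Sum>i\<in>I. l i * inner (a i) (b i))"
    by (simp add: sum_distrib_left[symmetric] sum_distrib_right[symmetric] sum1 mult.assoc)
  also have "(\<Sum>i\<in>I. \<Sum>j\<in>I. l i * l j * inner (a i) (b j))
      = inner (\<Sum>i\<in>I. l i *\<^sub>R a i) (\<Sum>i\<in>I. l i *\<^sub>R b i)"
    by (simp add: inner_sum_left inner_sum_right sum_distrib_left mult.assoc)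
      (subst sum.swap, simp add: algebra_simps)
  also have "(\<Sum>i\<in>I. \<Sum>j\<in>I. l i * l j * inner (a j) (b i))
      = inner (\<Sum>i\<in>I. l i *\<^sub>R a i) (\<Sum>i\<in>I. l i *\<^sub>R b i)"
    by (simp add: inner_sum_left inner_sum_right sum_distrib_left mult.assoc)
  finally show ?thesis by simp
qed

lemma nonpos_if_dominated_by_square:
  fixes D Q :: real
  assumes dom: "\<And>t. 0 < t \<Longrightarrow> t \<le> 1 \<Longrightarrow> t * D \<le> t\<^sup>2 * Q"
  shows "D \<le> 0"
proof (rule ccontr)
  assume "\<not> D \<le> 0"
  then have D: "0 < D" by simp
  define t where "t = min 1 (D / (\<bar>Q\<bar> + 1))"
  have t: "0 < t" "t \<le> 1" using D by (auto simp: t_def)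
  have "t * Q \<le> D / (\<bar>Q\<bar> + 1) * \<bar>Q\<bar>"
    using t by (intro order_trans[OF abs_ge_self[THEN mult_left_mono] mult_right_mono])
      (auto simp: t_def abs_mult)
  also have "\<dots> < D" using D by (simp add: field_simps)
  finally have "t * D > t * (t * Q)" using t by simp
  with dom[OF t] show False by (simp add: power2_eq_square mult.assoc)
qed

lemma concave_max_variational:
  fixes M :: "('a::real_inner \<times> real) set"
  assumes M: "convex M" "(y, s) \<in> M" "(c, \<sigma>) \<in> M"
    and max: "\<And>y' s'. (y', s') \<in> M \<Longrightarrow> s' - (norm y')\<^sup>2 \<le> s - (norm y)\<^sup>2"
  shows "\<sigma> - s \<le> 2 * inner y (c - y)"
proof -
  have "t * (\<sigma> - s - 2 * inner y (c - y)) \<le> t\<^sup>2 * (norm (c - y))\<^sup>2"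
    if t: "0 < t" "t \<le> 1" for t
  proof -
    have "(y + t *\<^sub>R (c - y), s + t * (\<sigma> - s)) = (1 - t) *\<^sub>R (y, s) + t *\<^sub>R (c, \<sigma>)"
      by (simp add: algebra_simps)
    also have "\<dots> \<in> M" using M t by (intro convexD) auto
    finally have "s + t * (\<sigma> - s) - (norm (y + t *\<^sub>R (c - y)))\<^sup>2 \<le> s - (norm y)\<^sup>2"
      by (rule max)
    moreover have "(norm (y + t *\<^sub>R (c - y)))\<^sup>2
        = (norm y)\<^sup>2 + 2 * t * inner y (c - y) + t\<^sup>2 * (norm (c - y))\<^sup>2"
      unfolding power2_norm_eq_inner
      by (simp add: inner_add_left inner_add_right inner_commute power2_eq_square algebra_simps)
    moreover have "t * (\<sigma> - s - 2 * inner y (c - y)) = t * (\<sigma> - s) - 2 * t * inner y (c - y)"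
      by (simp add: right_diff_distrib)
    ultimately show ?thesis by linarith
  qed
  then have "\<sigma> - s - 2 * inner y (c - y) \<le> 0" by (rule nonpos_if_dominated_by_square)
  then show ?thesis by simp
qed

definition lifted_pair :: "'a::real_inner \<times> 'a \<Rightarrow> 'a \<times> real" where
  "lifted_pair = (\<lambda>(a, b). ((1/2) *\<^sub>R (a - b), - inner a b))"

text \<open>For monotone G the convex hull of the lifted pairs lies below the paraboloid
  s = |y|^2; this is where monotonicity enters the Debrunner-Flor lemma.\<close>

lemma monotone_hull_below_paraboloid:
  fixes G :: "('a::real_inner \<times> 'a) set"
  assumes fin: "finite G" and mon: "monotone_set G"
    and ys: "(y, s) \<in> convex hull (lifted_pair ` G)"
  shows "s \<le> (norm y)\<^sup>2"
proof -
  let ?q = "lifted_pair :: 'a \<times> 'a \<Rightarrow> 'a \<times> real"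
  define rep where "rep = inv_into G ?q"
  have rep: "rep k \<in> G" "?q (rep k) = k" if "k \<in> ?q ` G" for k
    using that by (auto simp: rep_def inv_into_into f_inv_into_f)
  obtain u where u: "\<forall>k\<in>?q ` G. 0 \<le> u k" "sum u (?q ` G) = 1" "(\<Sum>k\<in>?q ` G. u k *\<^sub>R k) = (y, s)"
    using ys fin unfolding convex_hull_finite[OF finite_imageI[OF fin]] by blast
  define \<alpha> where "\<alpha> = (\<Sum>k\<in>?q ` G. u k *\<^sub>R fst (rep k))"
  define \<beta> where "\<beta> = (\<Sum>k\<in>?q ` G. u k *\<^sub>R snd (rep k))"
  have ys_sum: "(y, s) = (\<Sum>k\<in>?q ` G. u k *\<^sub>R ?q (rep k))"
    using rep u(3) by (metis (no_types, lifting) sum.cong)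
  have y: "y = (\<Sum>k\<in>?q ` G. u k *\<^sub>R fst (?q (rep k)))"
    using arg_cong[OF ys_sum, of fst] by (simp add: fst_sum)
  have s: "s = (\<Sum>k\<in>?q ` G. u k * snd (?q (rep k)))"
    using arg_cong[OF ys_sum, of snd] by (simp add: snd_sum)
  have "y = (1/2) *\<^sub>R (\<alpha> - \<beta>)"
    unfolding y \<alpha>_def \<beta>_def lifted_pair_def
    by (simp add: case_prod_beta scaleR_diff_right scaleR_sum_right sum_subtractf)
  moreover have "s = - (\<Sum>k\<in>?q ` G. u k * inner (fst (rep k)) (snd (rep k)))"
    unfolding s lifted_pair_def by (simp add: case_prod_beta sum_negf)
  moreover have "inner \<alpha> \<beta> \<le> (\<Sum>k\<in>?q ` G. u k * inner (fst (rep k)) (snd (rep k)))"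
  proof (unfold \<alpha>_def \<beta>_def, rule monotone_family_convex_combination)
    show "0 \<le> inner (fst (rep i) - fst (rep j)) (snd (rep i) - snd (rep j))"
      if "i \<in> ?q ` G" "j \<in> ?q ` G" for i j
      using mon rep(1)[OF that(1)] rep(1)[OF that(2)] unfolding monotone_set_def by blast
  qed (use fin u in auto)
  moreover have "- inner \<alpha> \<beta> - (norm ((1/2) *\<^sub>R (\<alpha> - \<beta>)))\<^sup>2 = - (norm ((1/2) *\<^sub>R (\<alpha> + \<beta>)))\<^sup>2"
    unfolding power2_norm_eq_inner
    by (simp add: inner_add_left inner_add_right inner_diff_left inner_diff_right
        inner_commute algebra_simps)
  ultimately show ?thesis by (smt (verit) zero_le_power2)
qed

text \<open>Debrunner-Flor lemma for finite monotone sets: the point maximising s - |y|^2 on the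
  (compact) convex hull of the lifted pairs satisfies every constraint.\<close>

lemma debrunner_flor_finite:
  fixes G :: "('a::real_inner \<times> 'a) set"
  assumes fin: "finite G" and mon: "monotone_set G" and ne: "G \<noteq> {}"
  shows "\<exists>y. \<forall>(a, b)\<in>G. y \<in> mono_related a b"
proof -
  define M where "M = convex hull (lifted_pair ` G)"
  let ?\<Psi> = "\<lambda>w::'a \<times> real. snd w - (norm (fst w))\<^sup>2"
  have "compact M" "M \<noteq> {}"
    using fin ne by (simp_all add: M_def finite_imp_compact_convex_hull)
  moreover have "continuous_on M ?\<Psi>" by (intro continuous_intros)
  ultimately obtain z where zM: "z \<in> M" and zmax: "\<And>w. w \<in> M \<Longrightarrow> ?\<Psi> w \<le> ?\<Psi> z"
    by (blast dest: continuous_attains_sup)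
  obtain y s where z: "z = (y, s)" by fastforce
  have ys: "(y, s) \<in> M" using zM z by simp
  have max: "\<And>y' s'. (y', s') \<in> M \<Longrightarrow> s' - (norm y')\<^sup>2 \<le> s - (norm y)\<^sup>2"
    using zmax z by fastforce
  have "y \<in> mono_related a b" if ab: "(a, b) \<in> G" for a b
  proof -
    have "((1/2) *\<^sub>R (a - b), - inner a b) \<in> M"
      using ab by (force simp: M_def lifted_pair_def intro: hull_inc)
    then have "- inner a b - s \<le> 2 * inner y ((1/2) *\<^sub>R (a - b) - y)"
      using ys max by (intro concave_max_variational[of M y s]) (simp_all add: M_def)
    moreover have "s \<le> (norm y)\<^sup>2"
      using ys unfolding M_def by (rule monotone_hull_below_paraboloid[OF fin mon])
    moreover have "inner (y - a) (y + b) = (norm y)\<^sup>2 - 2 * inner y ((1/2) *\<^sub>R (a - b)) - inner a b"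
      unfolding power2_norm_eq_inner
      by (simp add: inner_add_right inner_diff_left inner_diff_right inner_commute algebra_simps)
    ultimately show ?thesis
      by (simp add: mono_related_def inner_diff_right power2_norm_eq_inner)
  qed
  then show ?thesis by blast
qed

definition inf_norm2 :: "'a::real_normed_vector set \<Rightarrow> real" where
  "inf_norm2 K = Inf ((\<lambda>x. (norm x)\<^sup>2) ` K)"

lemma inf_norm2_le: "x \<in> K \<Longrightarrow> inf_norm2 K \<le> (norm x)\<^sup>2"
  unfolding inf_norm2_def by (rule cInf_lower) (auto intro: bdd_belowI[of _ 0])

lemma inf_norm2_approx:
  assumes "K \<noteq> {}" "0 < d"
  obtains x where "x \<in> K" "(norm x)\<^sup>2 < inf_norm2 K + d"
  using cInf_lessD[of "(\<lambda>x. (norm x)\<^sup>2) ` K" "inf_norm2 K + d"] assms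
  unfolding inf_norm2_def by auto

lemma inf_norm2_mono: "K' \<subseteq> K \<Longrightarrow> K' \<noteq> {} \<Longrightarrow> inf_norm2 K \<le> inf_norm2 K'"
  unfolding inf_norm2_def by (rule cInf_superset_mono) (auto intro: bdd_belowI[of _ 0])

text \<open>Parallelogram law: two points of a convex set whose squared norms are close to the
  infimum are close to each other.\<close>

lemma convex_parallelogram_bound:
  fixes x y :: "'a::real_inner"
  assumes "convex K" "x \<in> K" "y \<in> K"
  shows "(norm (x - y))\<^sup>2 \<le> 2 * (norm x)\<^sup>2 + 2 * (norm y)\<^sup>2 - 4 * inf_norm2 K"
proof -
  have "(1/2) *\<^sub>R x + (1/2) *\<^sub>R y \<in> K"
    using assms by (intro convexD) auto
  then have "inf_norm2 K \<le> (norm ((1/2) *\<^sub>R (x + y)))\<^sup>2"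
    by (simp add: inf_norm2_le scaleR_add_right)
  moreover have "(norm (x - y))\<^sup>2 = 2 * (norm x)\<^sup>2 + 2 * (norm y)\<^sup>2 - 4 * (norm ((1/2) *\<^sub>R (x + y)))\<^sup>2"
    unfolding power2_norm_eq_inner
    by (simp add: inner_add_left inner_add_right inner_diff_left inner_diff_right inner_commute
        field_simps)
  ultimately show ?thesis by linarith
qed

lemma near_minimizers_limit:
  fixes K :: "nat \<Rightarrow> 'a::{real_inner,complete_space} set"
  assumes convex: "\<And>n. convex (K n)" and decr: "\<And>m n. n \<le> m \<Longrightarrow> K m \<subseteq> K n"
    and \<delta>: "decseq \<delta>" "\<delta> \<longlonglongrightarrow> 0"
    and low: "\<And>n. E - \<delta> n \<le> inf_norm2 (K n)"
    and x: "\<And>n. x n \<in> K n" "\<And>n. (norm (x n))\<^sup>2 \<le> E + \<delta> n"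
  obtains L where "x \<longlonglongrightarrow> L"
    and "\<And>y. (\<And>n. y n \<in> K n) \<Longrightarrow> (\<And>n. (norm (y n))\<^sup>2 \<le> E + \<delta> n) \<Longrightarrow> y \<longlonglongrightarrow> L"
proof -
  have close: "(norm (y - x n))\<^sup>2 \<le> 8 * \<delta> n" if "y \<in> K n" "(norm y)\<^sup>2 \<le> E + \<delta> n" for y n
    using convex_parallelogram_bound[OF convex that(1) x(1)] that(2) x(2)[of n] low[of n] by linarith
  have small: "\<exists>N. \<forall>n\<ge>N. 8 * \<delta> n < e\<^sup>2" if "0 < e" for e
  proof -
    have "(\<lambda>n. 8 * \<delta> n) \<longlonglongrightarrow> 0" using tendsto_mult_right_zero[OF \<delta>(2)] by simp
    moreover have "0 < e\<^sup>2" using that by simp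
    ultimately have "eventually (\<lambda>n. 8 * \<delta> n < e\<^sup>2) sequentially"
      by (rule order_tendstoD(2))
    then show ?thesis by (simp add: eventually_sequentially)
  qed
  have small_dist: "\<exists>N. \<forall>n\<ge>N. \<forall>y. y \<in> K n \<longrightarrow> (norm y)\<^sup>2 \<le> E + \<delta> n \<longrightarrow> norm (y - x n) < e"
    if e: "0 < e" for e
  proof -
    obtain N where N: "\<And>n. n \<ge> N \<Longrightarrow> 8 * \<delta> n < e\<^sup>2" using small[OF e] by blast
    show ?thesis
    proof (intro exI[of _ N] allI impI)
      fix n y assume "N \<le> n" "y \<in> K n" "(norm y)\<^sup>2 \<le> E + \<delta> n"
      then have "(norm (y - x n))\<^sup>2 < e\<^sup>2" using close N by (meson le_less_trans)
      then show "norm (y - x n) < e" by (rule power2_less_imp_less) (use e in simp)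
    qed
  qed
  have "Cauchy x"
    unfolding Cauchy_altdef2
  proof (intro allI impI)
    fix e :: real assume "0 < e"
    then obtain N where N: "\<And>n y. n \<ge> N \<Longrightarrow> y \<in> K n \<Longrightarrow> (norm y)\<^sup>2 \<le> E + \<delta> n \<Longrightarrow> norm (y - x n) < e"
      using small_dist by blast
    have "norm (x n - x N) < e" if "n \<ge> N" for n
    proof (rule N[OF order_refl])
      show "x n \<in> K N" using decr[OF that] x(1) by blast
      show "(norm (x n))\<^sup>2 \<le> E + \<delta> N" using x(2)[of n] decseqD[OF \<delta>(1) that] by linarith
    qed
    then show "\<exists>N. \<forall>n\<ge>N. dist (x n) (x N) < e" by (auto simp: dist_norm)
  qed
  then obtain L where L: "x \<longlonglongrightarrow> L" by (auto simp: Cauchy_convergent_iff convergent_def)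
  have "y \<longlonglongrightarrow> L" if y: "\<And>n. y n \<in> K n" "\<And>n. (norm (y n))\<^sup>2 \<le> E + \<delta> n" for y
  proof -
    have "(\<lambda>n. y n - x n) \<longlonglongrightarrow> 0"
    proof (rule LIMSEQ_I)
      fix r :: real assume "0 < r"
      then obtain N where "\<forall>n\<ge>N. \<forall>y. y \<in> K n \<longrightarrow> (norm y)\<^sup>2 \<le> E + \<delta> n \<longrightarrow> norm (y - x n) < r"
        using small_dist by blast
      then have "\<forall>n\<ge>N. norm (y n - x n - 0) < r" using y by simp
      then show "\<exists>N. \<forall>n\<ge>N. norm (y n - x n - 0) < r" ..
    qed
    from tendsto_add[OF this L] show ?thesis by simp
  qed
  with L that show ?thesis by blast
qed

lemma fip_increasing_subfamilies:
  fixes \<C> :: "'a::real_normed_vector set set" and \<delta> :: "nat \<Rightarrow> real"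
  assumes C0: "C0 \<in> \<C>" "bounded C0"
    and fip: "\<And>\<F>. finite \<F> \<Longrightarrow> \<F> \<subseteq> \<C> \<Longrightarrow> \<Inter>\<F> \<noteq> {}"
    and \<delta>: "\<And>n. 0 < \<delta> n"
  obtains E H where "\<And>\<F>. finite \<F> \<Longrightarrow> \<F> \<subseteq> \<C> \<Longrightarrow> inf_norm2 (\<Inter>\<F>) \<le> E"
    and "\<And>n. finite (H n) \<and> H n \<subseteq> \<C>" and "\<And>m n. n \<le> m \<Longrightarrow> \<Inter>(H m) \<subseteq> \<Inter>(H n)"
    and "\<And>n. E - \<delta> n \<le> inf_norm2 (\<Inter>(H n))"
proof -
  let ?Fin = "{\<F>. finite \<F> \<and> \<F> \<subseteq> \<C>}"
  let ?m = "\<lambda>\<F>. inf_norm2 (\<Inter>\<F>)"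
  obtain b where b: "\<And>x. x \<in> C0 \<Longrightarrow> norm x \<le> b" using C0(2) unfolding bounded_iff by blast
  have m_bounded: "?m \<F> \<le> b\<^sup>2" if "\<F> \<in> ?Fin" for \<F>
  proof -
    have "\<Inter>(insert C0 \<F>) \<noteq> {}" using that C0(1) by (intro fip) auto
    then obtain x where x: "x \<in> \<Inter>(insert C0 \<F>)" by blast
    then have "?m \<F> \<le> (norm x)\<^sup>2" by (intro inf_norm2_le) auto
    also have "\<dots> \<le> b\<^sup>2" using b x by (intro power_mono) auto
    finally show ?thesis .
  qed
  define E where "E = (SUP \<F>\<in>?Fin. ?m \<F>)"
  have bdd: "bdd_above (?m ` ?Fin)" using m_bounded by (intro bdd_aboveI[of _ "b\<^sup>2"]) auto
  have m_le_E: "?m \<F> \<le> E" if "finite \<F>" "\<F> \<subseteq> \<C>" for \<F>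
    unfolding E_def using that bdd by (intro cSUP_upper) auto
  have "\<exists>\<F>\<in>?Fin. E - \<delta> n < ?m \<F>" for n
    using less_cSUP_iff[of ?Fin ?m "E - \<delta> n"] bdd \<delta>[of n] by (auto simp: E_def)
  then obtain \<F>s where \<F>s: "\<And>n. \<F>s n \<in> ?Fin" "\<And>n. E - \<delta> n < ?m (\<F>s n)" by metis
  define H where "H n = (\<Union>k\<le>n. \<F>s k)" for n
  have H: "finite (H n) \<and> H n \<subseteq> \<C>" for n
    using \<F>s(1) by (auto simp: H_def)
  have H_decr: "\<Inter>(H m) \<subseteq> \<Inter>(H n)" if "n \<le> m" for m n
    using that unfolding H_def by (intro Inter_anti_mono UN_mono) auto
  have H_low: "E - \<delta> n \<le> ?m (H n)" for n
  proof -
    have "?m (\<F>s n) \<le> ?m (H n)"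
      using fip H by (intro inf_norm2_mono) (auto simp: H_def)
    with \<F>s(2)[of n] show ?thesis by simp
  qed
  from m_le_E H H_decr H_low show ?thesis by (rule that)
qed

text \<open>This replaces the weak
  compactness of balls used in textbook proofs.\<close>

lemma closed_convex_fip:
  fixes \<C> :: "'a::{real_inner,complete_space} set set"
  assumes cc: "\<And>C. C \<in> \<C> \<Longrightarrow> convex C \<and> closed C"
    and C0: "C0 \<in> \<C>" "bounded C0"
    and fip: "\<And>\<F>. finite \<F> \<Longrightarrow> \<F> \<subseteq> \<C> \<Longrightarrow> \<Inter>\<F> \<noteq> {}"
  shows "\<Inter>\<C> \<noteq> {}"
proof -
  define \<delta> :: "nat \<Rightarrow> real" where "\<delta> n = inverse (real (Suc n))" for n
  have \<delta>: "decseq \<delta>" "\<delta> \<longlonglongrightarrow> 0" "\<And>n. 0 < \<delta> n"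
    unfolding \<delta>_def using LIMSEQ_inverse_real_of_nat
    by (auto simp: decseq_def le_imp_inverse_le)
  obtain E H where m_le_E: "\<And>\<F>. finite \<F> \<Longrightarrow> \<F> \<subseteq> \<C> \<Longrightarrow> inf_norm2 (\<Inter>\<F>) \<le> E"
    and H: "\<And>n. finite (H n) \<and> H n \<subseteq> \<C>" and H_decr: "\<And>m n. n \<le> m \<Longrightarrow> \<Inter>(H m) \<subseteq> \<Inter>(H n)"
    and H_low: "\<And>n. E - \<delta> n \<le> inf_norm2 (\<Inter>(H n))"
    using fip_increasing_subfamilies[where \<delta> = \<delta>, OF C0 fip \<delta>(3)] by blast
  have near_min: "\<exists>y. y \<in> \<Inter>\<F> \<and> (norm y)\<^sup>2 \<le> E + \<delta> n" if F: "finite \<F>" "\<F> \<subseteq> \<C>" for \<F> n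
  proof -
    obtain y where y: "y \<in> \<Inter>\<F>" "(norm y)\<^sup>2 < inf_norm2 (\<Inter>\<F>) + \<delta> n"
      using inf_norm2_approx[OF fip[OF F] \<delta>(3)] by blast
    moreover have "(norm y)\<^sup>2 \<le> E + \<delta> n" using y(2) m_le_E[OF F] by linarith
    ultimately show ?thesis by blast
  qed
  have "\<forall>n. \<exists>y. y \<in> \<Inter>(H n) \<and> (norm y)\<^sup>2 \<le> E + \<delta> n" using near_min H by blast
  then obtain x where x: "\<And>n. x n \<in> \<Inter>(H n)" "\<And>n. (norm (x n))\<^sup>2 \<le> E + \<delta> n"
    by (metis choice)
  have H_convex: "convex (\<Inter>(H n))" for n
    using cc H[of n] by (intro convex_Inter) auto
  obtain L where lim: "\<And>y. (\<And>n. y n \<in> \<Inter>(H n)) \<Longrightarrow> (\<And>n. (norm (y n))\<^sup>2 \<le> E + \<delta> n) \<Longrightarrow> y \<longlonglongrightarrow> L"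
    using near_minimizers_limit[of "\<lambda>n. \<Inter>(H n)", OF H_convex H_decr \<delta>(1,2) H_low x] by blast
  have "L \<in> C" if C: "C \<in> \<C>" for C
  proof -
    have "\<forall>n. \<exists>y. y \<in> \<Inter>(insert C (H n)) \<and> (norm y)\<^sup>2 \<le> E + \<delta> n"
      using near_min H C by (meson finite_insert insert_subset)
    then obtain y where y: "\<And>n. y n \<in> \<Inter>(insert C (H n))" "\<And>n. (norm (y n))\<^sup>2 \<le> E + \<delta> n"
      by (metis choice)
    then have "y \<longlonglongrightarrow> L" by (intro lim) auto
    moreover have "\<forall>n. y n \<in> C" using y(1) by simp
    ultimately show "L \<in> C" using cc[OF C] closed_sequentially by blast
  qed
  then show ?thesis by blast
qed

lemma debrunner_flor:
  fixes G :: "('a::{real_inner,complete_space} \<times> 'a) set"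
  assumes mon: "monotone_set G"
  shows "\<exists>y. \<forall>(a, b)\<in>G. y \<in> mono_related a b"
proof (cases "G = {}")
  case False
  then obtain g0 where g0: "g0 \<in> G" by blast
  let ?C = "(\<lambda>(a, b). mono_related a b) ` G"
  have "\<Inter>?C \<noteq> {}"
  proof (rule closed_convex_fip)
    show "C \<in> ?C \<Longrightarrow> convex C \<and> closed C" for C by (auto simp: mono_related_cball)
    show "(\<lambda>(a, b). mono_related a b) g0 \<in> ?C" using g0 by blast
    show "bounded ((\<lambda>(a, b). mono_related a b) g0)" by (simp add: mono_related_cball case_prod_beta)
  next
    fix \<F> assume "finite \<F>" "\<F> \<subseteq> ?C"
    then obtain G' where G': "G' \<subseteq> G" "finite G'" "\<F> = (\<lambda>(a, b). mono_related a b) ` G'"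
      by (meson finite_subset_image)
    show "\<Inter>\<F> \<noteq> {}"
    proof (cases "G' = {}")
      case False
      have "monotone_set G'" using mon G'(1) unfolding monotone_set_def by blast
      then show ?thesis using debrunner_flor_finite[OF G'(2) _ False] G'(3) by blast
    qed (use G' in simp)
  qed
  then show ?thesis by blast
qed simp

text \<open>Pointwise form of the equivalence: T firmly nonexpansive iff 2T - Id nonexpansive.\<close>

lemma firm_iff_reflection:
  fixes d e :: "'a::real_inner"
  shows "(norm d)\<^sup>2 \<le> inner d e \<longleftrightarrow> norm (2 *\<^sub>R d - e) \<le> norm e"
proof -
  have "inner (2 *\<^sub>R d - e) (2 *\<^sub>R d - e) = 4 * (norm d)\<^sup>2 - 4 * inner d e + inner e e"
    unfolding power2_norm_eq_inner
    by (simp add: inner_diff_left inner_diff_right inner_commute algebra_simps)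
  then show ?thesis unfolding norm_le by linarith
qed

lemma maximal_monotone_closed:
  fixes A :: "'a::real_inner \<Rightarrow> 'a set"
  assumes mm: "maximal_monotone A"
    and rel: "\<And>a u. u \<in> A a \<Longrightarrow> 0 \<le> inner (p - a) (w - u)"
  shows "w \<in> A p"
proof -
  have monA: "monotone_op A" using mm unfolding maximal_monotone_def by blast
  define B where "B x = (if x = p then insert w (A p) else A x)" for x
  have rel': "0 \<le> inner (x - x') (u - u')" if "u \<in> A x" "x' = p" "u' = w" for x x' u u'
    using rel[OF that(1)] that(2,3) by (simp add: inner_diff_left inner_diff_right algebra_simps)
  have "monotone_op B"
    unfolding monotone_op_def B_def using monA rel rel'
    by (auto simp: monotone_op_def split: if_splits)
  moreover have "\<forall>x. A x \<subseteq> B x" by (auto simp: B_def)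
  ultimately have "B = A" using mm unfolding maximal_monotone_def by blast
  then show "w \<in> A p" by (metis B_def insertI1)
qed

definition resolvent :: "real \<Rightarrow> ('a::real_vector \<Rightarrow> 'a set) \<Rightarrow> 'a \<Rightarrow> 'a" where
  "resolvent t A z = (THE p. z - p \<in> (\<lambda>v. t *\<^sub>R v) ` A p)"

lemma minty:
  fixes A :: "'a::{real_inner,complete_space} \<Rightarrow> 'a set"
  assumes mm: "maximal_monotone A" and t: "0 < t"
  shows "\<exists>p. z - p \<in> (\<lambda>v. t *\<^sub>R v) ` A p"
proof -
  have monA: "monotone_op A" using mm unfolding maximal_monotone_def by blast
  define G where "G = {(a - z, t *\<^sub>R u) | a u. u \<in> A a}"
  have "monotone_set G"
    unfolding monotone_set_def G_def
  proof clarsimp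
    fix a u a' u' assume "u \<in> A a" "u' \<in> A a'"
    then have "0 \<le> inner (a - a') (u - u')" using monA unfolding monotone_op_def by blast
    then show "0 \<le> inner (a - a') (t *\<^sub>R u - t *\<^sub>R u')"
      using t by (simp add: scaleR_diff_right[symmetric])
  qed
  then obtain y where y: "\<forall>(a, b)\<in>G. y \<in> mono_related a b" using debrunner_flor by blast
  define p where "p = y + z"
  define w where "w = (1/t) *\<^sub>R (z - p)"
  have "w \<in> A p"
  proof (rule maximal_monotone_closed[OF mm])
    fix a u assume "u \<in> A a"
    then have "inner (y - (a - z)) (y + t *\<^sub>R u) \<le> 0"
      using y unfolding G_def mono_related_def by blast
    then have "0 \<le> inner (p - a) (t *\<^sub>R (w - u))"
      using t by (simp add: p_def w_def inner_diff_right inner_add_right algebra_simps)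
    then show "0 \<le> inner (p - a) (w - u)" using t by (simp add: zero_le_mult_iff)
  qed
  moreover have "z - p = t *\<^sub>R w" using t by (simp add: w_def)
  ultimately show ?thesis by blast
qed

lemma resolvent_unique:
  fixes A :: "'a::real_inner \<Rightarrow> 'a set"
  assumes monA: "monotone_op A" and t: "0 < t"
    and p: "z - p \<in> (\<lambda>v. t *\<^sub>R v) ` A p" and q: "z - q \<in> (\<lambda>v. t *\<^sub>R v) ` A q"
  shows "p = q"
proof -
  obtain u v where u: "u \<in> A p" "z - p = t *\<^sub>R u" and v: "v \<in> A q" "z - q = t *\<^sub>R v"
    using p q by blast
  have "0 \<le> t * inner (p - q) (u - v)" using monA u v t unfolding monotone_op_def by simp
  also have "t * inner (p - q) (u - v) = inner (p - q) (q - p)"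
  proof -
    have "t *\<^sub>R (u - v) = q - p" using u(2) v(2) by (simp add: algebra_simps)
    then show ?thesis by (metis inner_scaleR_right)
  qed
  also have "\<dots> = - (norm (p - q))\<^sup>2"
    by (simp add: power2_norm_eq_inner inner_diff_right inner_diff_left inner_commute)
  finally show ?thesis by simp
qed

lemma resolvent_eq:
  fixes A :: "'a::{real_inner,complete_space} \<Rightarrow> 'a set"
  assumes mm: "maximal_monotone A" and t: "0 < t"
  shows "z - p \<in> (\<lambda>v. t *\<^sub>R v) ` A p \<longleftrightarrow> p = resolvent t A z"
proof -
  have monA: "monotone_op A" using mm unfolding maximal_monotone_def by blast
  obtain p0 where p0: "z - p0 \<in> (\<lambda>v. t *\<^sub>R v) ` A p0" using minty[OF mm t] by blast
  have "resolvent t A z = p0"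
    unfolding resolvent_def using p0 resolvent_unique[OF monA t _ p0] by blast
  then show ?thesis using p0 resolvent_unique[OF monA t _ p0] by blast
qed

lemma resolvent_firmly_nonexpansive:
  fixes A :: "'a::{real_inner,complete_space} \<Rightarrow> 'a set"
  assumes mm: "maximal_monotone A" and t: "0 < t"
  shows "(norm (resolvent t A z - resolvent t A z'))\<^sup>2
           \<le> inner (resolvent t A z - resolvent t A z') (z - z')"
proof -
  let ?p = "resolvent t A z" and ?p' = "resolvent t A z'"
  have monA: "monotone_op A" using mm unfolding maximal_monotone_def by blast
  obtain u where u: "u \<in> A ?p" "z - ?p = t *\<^sub>R u" using resolvent_eq[OF mm t] by blast
  obtain v where v: "v \<in> A ?p'" "z' - ?p' = t *\<^sub>R v" using resolvent_eq[OF mm t] by blast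
  have "0 \<le> t * inner (?p - ?p') (u - v)" using monA u v t unfolding monotone_op_def by simp
  also have "\<dots> = inner (?p - ?p') ((z - ?p) - (z' - ?p'))"
    by (simp only: u(2) v(2)) (simp add: inner_diff_right algebra_simps)
  finally show ?thesis unfolding power2_norm_eq_inner
    by (simp add: inner_diff_right inner_diff_left algebra_simps)
qed

lemma resolvent_reflection_nonexpansive:
  fixes A :: "'a::{real_inner,complete_space} \<Rightarrow> 'a set"
  assumes mm: "maximal_monotone A" and t: "0 < t"
  shows "norm ((2 *\<^sub>R resolvent t A z - z) - (2 *\<^sub>R resolvent t A z' - z')) \<le> norm (z - z')"
  using resolvent_firmly_nonexpansive[OF mm t, of z z'] unfolding firm_iff_reflection
  by (simp add: algebra_simps)

text \<open>Isometric embedding of the weighted product space into the inner product space 'a^'i,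
  so that the inner product space facts above apply to product-space operators.\<close>

definition weighted_embed :: "('i::finite \<Rightarrow> real) \<Rightarrow> ('i \<Rightarrow> 'a::real_inner) \<Rightarrow> 'a ^ 'i" where
  "weighted_embed \<omega> x = (\<chi> i. sqrt (\<omega> i) *\<^sub>R x i)"

definition wavg :: "('i::finite \<Rightarrow> real) \<Rightarrow> ('i \<Rightarrow> 'a::real_vector) \<Rightarrow> 'a" where
  "wavg \<omega> x = (\<Sum>i\<in>UNIV. \<omega> i *\<^sub>R x i)"

lemma inner_weighted_embed:
  "(\<forall>i. 0 \<le> \<omega> i) \<Longrightarrow> inner (weighted_embed \<omega> x) (weighted_embed \<omega> y) = pinner \<omega> x y"
  unfolding weighted_embed_def inner_vec_def pinner_def by (simp add: mult.assoc[symmetric])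

lemma weighted_embed_diff:
  "weighted_embed \<omega> x - weighted_embed \<omega> y = weighted_embed \<omega> (\<lambda>i. x i - y i)"
  unfolding weighted_embed_def by (simp add: vec_eq_iff algebra_simps)

lemma norm_weighted_embed_sq:
  "(\<forall>i. 0 \<le> \<omega> i) \<Longrightarrow> (norm (weighted_embed \<omega> x))\<^sup>2 = (\<Sum>i\<in>UNIV. \<omega> i * (norm (x i))\<^sup>2)"
  unfolding power2_norm_eq_inner by (simp add: inner_weighted_embed pinner_def)

lemma pnorm_weighted_embed: "(\<forall>i. 0 \<le> \<omega> i) \<Longrightarrow> pnorm \<omega> x = norm (weighted_embed \<omega> x)"
  unfolding pnorm_def norm_eq_sqrt_inner by (simp add: inner_weighted_embed)

lemma wavg_diff: "wavg \<omega> x - wavg \<omega> y = wavg \<omega> (\<lambda>i. x i - y i)"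
  unfolding wavg_def by (simp add: sum_subtractf scaleR_diff_right)

lemma sum_inner_wavg: "(\<Sum>i\<in>UNIV. \<omega> i * inner c (z i)) = inner c (wavg \<omega> z)"
  unfolding wavg_def by (simp add: inner_sum_right)

lemma wavg_const: "(\<Sum>i\<in>UNIV. \<omega> i) = 1 \<Longrightarrow> wavg \<omega> (\<lambda>i. c) = c"
  unfolding wavg_def by (simp add: scaleR_sum_left[symmetric])

lemma presolvent_normal_cone:
  fixes \<omega> :: "'i::finite \<Rightarrow> real" and x :: "'i \<Rightarrow> 'a::real_inner"
  assumes sum1: "(\<Sum>i\<in>UNIV. \<omega> i) = 1"
  shows "presolvent (normal_cone_S \<omega>) x = (\<lambda>i. wavg \<omega> x)"
proof -
  have pinner_const: "pinner \<omega> (\<lambda>i. c) (\<lambda>i. x i - d) = inner c (wavg \<omega> x - d)" for c d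
    unfolding pinner_def sum_inner_wavg wavg_diff[symmetric] wavg_const[OF sum1] ..
  have diag: "p \<in> diagS \<longleftrightarrow> (\<exists>a. p = (\<lambda>i. a))" for p :: "'i \<Rightarrow> 'a"
    unfolding diagS_def by auto
  have "(\<lambda>i. x i - p i) \<in> normal_cone_S \<omega> p \<longleftrightarrow> p = (\<lambda>i. wavg \<omega> x)" for p
  proof
    assume p: "(\<lambda>i. x i - p i) \<in> normal_cone_S \<omega> p"
    then have "p \<in> diagS" and perp: "(\<lambda>i. x i - p i) \<in> diagS_perp \<omega>"
      by (auto simp: normal_cone_S_def split: if_splits)
    then obtain a where a: "p = (\<lambda>i. a)" using diag by blast
    have "(\<lambda>i. wavg \<omega> x - a) \<in> diagS" by (simp add: diagS_def)
    then have "pinner \<omega> (\<lambda>i. wavg \<omega> x - a) (\<lambda>i. x i - a) = 0"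
      using perp unfolding a diagS_perp_def by blast
    then have "wavg \<omega> x - a = 0" unfolding pinner_const by simp
    then show "p = (\<lambda>i. wavg \<omega> x)" using a by simp
  next
    assume p: "p = (\<lambda>i. wavg \<omega> x)"
    have "pinner \<omega> c (\<lambda>i. x i - wavg \<omega> x) = 0" if "c \<in> diagS" for c
      using that pinner_const[of _ "wavg \<omega> x"] diag by auto
    then show "(\<lambda>i. x i - p i) \<in> normal_cone_S \<omega> p"
      using p diag by (auto simp: normal_cone_S_def diagS_perp_def)
  qed
  then show ?thesis unfolding presolvent_def by simp
qed

lemma presolvent_scaled_prod:
  fixes A :: "'i \<Rightarrow> 'a::{real_inner,complete_space} \<Rightarrow> 'a set"
  assumes mm: "\<forall>i. maximal_monotone (A i)" and g: "\<forall>i. 0 < g i"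
  shows "presolvent (scaled_prod_op g A) x = (\<lambda>i. resolvent (g i) (A i) (x i))"
proof -
  have "(\<lambda>i. x i - p i) \<in> scaled_prod_op g A p \<longleftrightarrow> p = (\<lambda>i. resolvent (g i) (A i) (x i))" for p
  proof -
    have "x i - p i \<in> (\<lambda>v. g i *\<^sub>R v) ` A i (p i) \<longleftrightarrow> p i = resolvent (g i) (A i) (x i)" for i
      using resolvent_eq mm g by blast
    then show ?thesis by (simp add: scaled_prod_op_def fun_eq_iff)
  qed
  then show ?thesis unfolding presolvent_def by simp
qed

lemma reflection_normal_cone_isometry:
  fixes \<omega> :: "'i::finite \<Rightarrow> real" and a b :: "'i \<Rightarrow> 'a::real_inner"
  assumes sum1: "(\<Sum>i\<in>UNIV. \<omega> i) = 1"
  shows "(\<Sum>i\<in>UNIV. \<omega> i * (norm ((2 *\<^sub>R wavg \<omega> a - a i) - (2 *\<^sub>R wavg \<omega> b - b i)))\<^sup>2)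
       = (\<Sum>i\<in>UNIV. \<omega> i * (norm (a i - b i))\<^sup>2)"
proof -
  define d where "d = (\<lambda>i. a i - b i)"
  define D where "D = wavg \<omega> d"
  have reflected: "(2 *\<^sub>R wavg \<omega> a - a i) - (2 *\<^sub>R wavg \<omega> b - b i) = 2 *\<^sub>R D - d i" for i
    unfolding D_def d_def wavg_diff[symmetric] by (simp add: algebra_simps)
  have "(\<Sum>i\<in>UNIV. \<omega> i * (norm ((2 *\<^sub>R wavg \<omega> a - a i) - (2 *\<^sub>R wavg \<omega> b - b i)))\<^sup>2)
      = (\<Sum>i\<in>UNIV. 4 * inner D D * \<omega> i - 4 * (\<omega> i * inner D (d i)) + \<omega> i * inner (d i) (d i))"
    unfolding reflected power2_norm_eq_inner
    by (intro sum.cong refl) (simp add: inner_diff_left inner_diff_right inner_commute algebra_simps)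
  also have "\<dots> = 4 * inner D D * (\<Sum>i\<in>UNIV. \<omega> i) - 4 * (\<Sum>i\<in>UNIV. \<omega> i * inner D (d i))
      + (\<Sum>i\<in>UNIV. \<omega> i * inner (d i) (d i))"
    by (simp add: sum.distrib sum_subtractf sum_distrib_left)
  also have "\<dots> = (\<Sum>i\<in>UNIV. \<omega> i * (norm (a i - b i))\<^sup>2)"
    using sum1 by (simp add: sum_inner_wavg D_def d_def power2_norm_eq_inner)
  finally show ?thesis .
qed

text \<open>T1 is the average of Id and a composition of two nonexpansive reflections, hence is
  firmly nonexpansive.\<close>

lemma T1_firmly_nonexpansive:
  fixes \<omega> :: "'i::finite \<Rightarrow> real" and A :: "'i \<Rightarrow> 'a::{real_inner,complete_space} \<Rightarrow> 'a set"
  assumes w0: "\<forall>i. 0 \<le> \<omega> i" and sum1: "(\<Sum>i\<in>UNIV. \<omega> i) = 1"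
    and mm: "\<forall>i. maximal_monotone (A i)" and g: "\<forall>i. 0 < g i"
  shows "(norm (weighted_embed \<omega> (T1 \<omega> g A x) - weighted_embed \<omega> (T1 \<omega> g A y)))\<^sup>2
     \<le> inner (weighted_embed \<omega> (T1 \<omega> g A x) - weighted_embed \<omega> (T1 \<omega> g A y))
          (weighted_embed \<omega> x - weighted_embed \<omega> y)"
proof -
  define N where "N z = (\<lambda>i. 2 *\<^sub>R wavg \<omega> z - z i)" for z :: "'i \<Rightarrow> 'a"
  define r where "r z = (\<lambda>i. 2 *\<^sub>R resolvent (g i) (A i) (N z i) - N z i)" for z
  have T1: "T1 \<omega> g A z = (\<lambda>i. (1/2) *\<^sub>R (r z i + z i))" for z
    unfolding T1_def preflection_def presolvent_scaled_prod[OF mm g]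
      presolvent_normal_cone[OF sum1] r_def N_def ..
  define \<rho> where "\<rho> = weighted_embed \<omega> (r x) - weighted_embed \<omega> (r y)"
  define W where "W = weighted_embed \<omega> x - weighted_embed \<omega> y"
  have "(norm \<rho>)\<^sup>2 = (\<Sum>i\<in>UNIV. \<omega> i * (norm (r x i - r y i))\<^sup>2)"
    unfolding \<rho>_def weighted_embed_diff by (rule norm_weighted_embed_sq[OF w0])
  also have "\<dots> \<le> (\<Sum>i\<in>UNIV. \<omega> i * (norm (N x i - N y i))\<^sup>2)"
  proof (rule sum_mono)
    fix i
    have "norm (r x i - r y i) \<le> norm (N x i - N y i)"
      unfolding r_def using resolvent_reflection_nonexpansive mm g by blast
    then show "\<omega> i * (norm (r x i - r y i))\<^sup>2 \<le> \<omega> i * (norm (N x i - N y i))\<^sup>2"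
      using w0 by (simp add: mult_left_mono power_mono)
  qed
  also have "\<dots> = (norm W)\<^sup>2"
    unfolding N_def W_def weighted_embed_diff reflection_normal_cone_isometry[OF sum1] norm_weighted_embed_sq[OF w0] ..
  finally have "norm \<rho> \<le> norm W" by (rule power2_le_imp_le) simp
  then have "(norm ((1/2) *\<^sub>R (\<rho> + W)))\<^sup>2 \<le> inner ((1/2) *\<^sub>R (\<rho> + W)) W"
    unfolding firm_iff_reflection by simp
  moreover have "weighted_embed \<omega> (T1 \<omega> g A x) - weighted_embed \<omega> (T1 \<omega> g A y) = (1/2) *\<^sub>R (\<rho> + W)"
    unfolding T1 \<rho>_def W_def weighted_embed_def by (simp add: vec_eq_iff algebra_simps)
  ultimately show ?thesis unfolding W_def by simp
qed

lemma cocoercive_of_firmly_nonexpansive: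
  fixes B :: "'a::real_inner \<Rightarrow> 'a"
  assumes b: "0 < \<beta>" and fn: "firmly_nonexpansive (\<lambda>x. \<beta> *\<^sub>R B x)"
  shows "\<beta> * (norm (B p - B q))\<^sup>2 \<le> inner (p - q) (B p - B q)"
proof -
  obtain R where R: "nonexpansive R" and RB: "\<And>x. \<beta> *\<^sub>R B x = (1 - 1/2) *\<^sub>R x + (1/2) *\<^sub>R R x"
    using fn unfolding firmly_nonexpansive_def averaged_def by blast
  have "2 *\<^sub>R (\<beta> *\<^sub>R (B p - B q)) - (p - q) = R p - R q"
    using RB[of p] RB[of q] by (simp add: algebra_simps)
  then have "(norm (\<beta> *\<^sub>R (B p - B q)))\<^sup>2 \<le> inner (\<beta> *\<^sub>R (B p - B q)) (p - q)"
    using R unfolding firm_iff_reflection nonexpansive_def by simp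
  moreover have "(norm (\<beta> *\<^sub>R (B p - B q)))\<^sup>2 = \<beta> * (\<beta> * (norm (B p - B q))\<^sup>2)"
    using b by (simp add: power_mult_distrib power2_eq_square)
  moreover have "inner (\<beta> *\<^sub>R (B p - B q)) (p - q) = \<beta> * inner (p - q) (B p - B q)"
    by (simp add: inner_commute)
  ultimately have "\<beta> * (\<beta> * (norm (B p - B q))\<^sup>2) \<le> \<beta> * inner (p - q) (B p - B q)"
    by linarith
  then show ?thesis using b by (rule mult_left_le_imp_le)
qed

text \<open>Cocoercivity of B makes T2 a contraction-like map with the quantitative bound below.\<close>

lemma T2_inequality:
  fixes \<omega> :: "'i::finite \<Rightarrow> real" and B :: "'a::real_inner \<Rightarrow> 'a" and x y :: "'i \<Rightarrow> 'a"
  assumes w0: "\<forall>i. 0 \<le> \<omega> i" and sum1: "(\<Sum>i\<in>UNIV. \<omega> i) = 1"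
    and b: "0 < \<beta>" and fn: "firmly_nonexpansive (\<lambda>x. \<beta> *\<^sub>R B x)" and g: "0 < \<gamma>"
  defines "u \<equiv> weighted_embed \<omega> x - weighted_embed \<omega> y"
    and "w \<equiv> weighted_embed \<omega> (T2 \<omega> \<gamma> B x) - weighted_embed \<omega> (T2 \<omega> \<gamma> B y)"
  shows "(norm w)\<^sup>2 + ((2 * \<beta> - \<gamma>) / \<gamma>) * (norm (u - w))\<^sup>2 \<le> (norm u)\<^sup>2"
proof -
  define d where "d = (\<lambda>i. x i - y i)"
  define E where "E = B (wavg \<omega> x) - B (wavg \<omega> y)"
  have T2: "T2 \<omega> \<gamma> B z = (\<lambda>i. z i - \<gamma> *\<^sub>R B (wavg \<omega> z))" for z
    unfolding T2_def diag_op_def presolvent_normal_cone[OF sum1] ..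
  have w: "w = weighted_embed \<omega> (\<lambda>i. d i - \<gamma> *\<^sub>R E)" and uw: "u - w = weighted_embed \<omega> (\<lambda>i. \<gamma> *\<^sub>R E)"
    unfolding u_def w_def T2 weighted_embed_diff d_def E_def by (simp_all add: algebra_simps)
  have nu: "(norm u)\<^sup>2 = (\<Sum>i\<in>UNIV. \<omega> i * (norm (d i))\<^sup>2)"
    unfolding u_def weighted_embed_diff d_def by (rule norm_weighted_embed_sq[OF w0])
  have nuw: "(norm (u - w))\<^sup>2 = \<gamma>\<^sup>2 * (norm E)\<^sup>2"
    unfolding uw norm_weighted_embed_sq[OF w0] using sum1
    by (simp add: sum_distrib_right[symmetric] power_mult_distrib)
  have "(norm w)\<^sup>2 = (\<Sum>i\<in>UNIV. \<omega> i * inner (d i) (d i) - 2 * \<gamma> * (\<omega> i * inner E (d i))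
      + \<gamma>\<^sup>2 * inner E E * \<omega> i)"
    unfolding w norm_weighted_embed_sq[OF w0] unfolding power2_norm_eq_inner
    by (intro sum.cong refl) (simp add: inner_diff_left inner_diff_right inner_commute
        algebra_simps power2_eq_square)
  also have "\<dots> = (norm u)\<^sup>2 - 2 * \<gamma> * inner (wavg \<omega> d) E + \<gamma>\<^sup>2 * (norm E)\<^sup>2"
    unfolding nu using sum1
    by (simp add: sum.distrib sum_subtractf sum_distrib_left[symmetric] sum_distrib_right[symmetric]
        sum_inner_wavg power2_norm_eq_inner inner_commute)
  finally have nw: "(norm w)\<^sup>2 = (norm u)\<^sup>2 - 2 * \<gamma> * inner (wavg \<omega> d) E + \<gamma>\<^sup>2 * (norm E)\<^sup>2" .
  have "\<beta> * (norm E)\<^sup>2 \<le> inner (wavg \<omega> d) E"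
    unfolding E_def d_def wavg_diff[symmetric] by (rule cocoercive_of_firmly_nonexpansive[OF b fn])
  then have "0 \<le> 2 * \<gamma> * (inner (wavg \<omega> d) E - \<beta> * (norm E)\<^sup>2)" using g by simp
  moreover have "((2 * \<beta> - \<gamma>) / \<gamma>) * (\<gamma>\<^sup>2 * (norm E)\<^sup>2) = (2 * \<beta> - \<gamma>) * \<gamma> * (norm E)\<^sup>2"
    using g by (simp add: power2_eq_square field_simps)
  ultimately show ?thesis unfolding nw nuw by (simp add: algebra_simps power2_eq_square)
qed

text \<open>Combining a firmly nonexpansive step v of w with the T2 estimate for w in terms of u
  yields an averagedness estimate for the composition.\<close>

lemma composition_inequality:
  fixes u v w :: "'a::real_inner"
  assumes firm: "(norm v)\<^sup>2 \<le> inner v w"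
    and coco: "(norm w)\<^sup>2 + \<kappa> * (norm (u - w))\<^sup>2 \<le> (norm u)\<^sup>2"
    and \<kappa>: "0 < \<kappa>" and k: "0 \<le> k" "k \<le> \<kappa> / (1 + \<kappa>)"
  shows "(norm v)\<^sup>2 + k * (norm (u - v))\<^sup>2 \<le> (norm u)\<^sup>2"
proof -
  have firm': "(norm v)\<^sup>2 + (norm (w - v))\<^sup>2 \<le> (norm w)\<^sup>2"
  proof -
    have "(norm (w - v))\<^sup>2 = (norm w)\<^sup>2 - 2 * inner v w + (norm v)\<^sup>2"
      unfolding power2_norm_eq_inner by (simp add: inner_diff_left inner_diff_right inner_commute)
    then show ?thesis using firm by linarith
  qed
  have split: "\<kappa> / (1 + \<kappa>) * (norm (u - v))\<^sup>2 \<le> \<kappa> * (norm (u - w))\<^sup>2 + (norm (w - v))\<^sup>2"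
  proof -
    have "(1 + \<kappa>) * (\<kappa> * (norm (u - w))\<^sup>2 + (norm (w - v))\<^sup>2) - \<kappa> * (norm (u - v))\<^sup>2
        = (norm (\<kappa> *\<^sub>R (u - w) - (w - v)))\<^sup>2"
      unfolding power2_norm_eq_inner
      by (simp add: inner_diff_left inner_diff_right inner_commute algebra_simps power2_eq_square)
    then have "\<kappa> * (norm (u - v))\<^sup>2 \<le> (1 + \<kappa>) * (\<kappa> * (norm (u - w))\<^sup>2 + (norm (w - v))\<^sup>2)"
      by (smt (verit) zero_le_power2)
    then show ?thesis using \<kappa> by (simp add: field_simps)
  qed
  have "k * (norm (u - v))\<^sup>2 \<le> \<kappa> / (1 + \<kappa>) * (norm (u - v))\<^sup>2"
    using k by (intro mult_right_mono) auto
  then show ?thesis using split firm' coco by linarith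
qed

text \<open>The identity behind the characterisation of averaged operators.\<close>

lemma averaged_identity:
  fixes u r :: "'a::real_inner"
  assumes \<alpha>: "\<alpha> \<noteq> 0"
  defines "v \<equiv> (1 - \<alpha>) *\<^sub>R u + \<alpha> *\<^sub>R r"
  shows "(norm v)\<^sup>2 + ((1 - \<alpha>) / \<alpha>) * (norm (u - v))\<^sup>2 = (1 - \<alpha>) * (norm u)\<^sup>2 + \<alpha> * (norm r)\<^sup>2"
proof -
  have "u - v = \<alpha> *\<^sub>R (u - r)" by (simp add: v_def algebra_simps)
  then have "(norm (u - v))\<^sup>2 = \<alpha>\<^sup>2 * (norm (u - r))\<^sup>2" by (simp add: power_mult_distrib)
  also have "(norm (u - r))\<^sup>2 = (norm u)\<^sup>2 - 2 * inner u r + (norm r)\<^sup>2"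
    unfolding power2_norm_eq_inner by (simp add: inner_diff_left inner_diff_right inner_commute)
  finally have uv_sq: "(norm (u - v))\<^sup>2 = \<alpha>\<^sup>2 * ((norm u)\<^sup>2 - 2 * inner u r + (norm r)\<^sup>2)" .
  have uv: "((1 - \<alpha>) / \<alpha>) * (norm (u - v))\<^sup>2
      = (1 - \<alpha>) * \<alpha> * ((norm u)\<^sup>2 - 2 * inner u r + (norm r)\<^sup>2)"
    unfolding uv_sq using \<alpha> by (simp add: power2_eq_square field_simps)
  have v: "(norm v)\<^sup>2 = (1 - \<alpha>)\<^sup>2 * (norm u)\<^sup>2 + 2 * \<alpha> * (1 - \<alpha>) * inner u r + \<alpha>\<^sup>2 * (norm r)\<^sup>2"
    unfolding v_def power2_norm_eq_inner
    by (simp add: inner_add_left inner_add_right inner_commute power2_eq_square algebra_simps)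
  show ?thesis unfolding uv v by (simp add: power2_eq_square algebra_simps)
qed

lemma paveraged_if_inequality:
  fixes \<omega> :: "'i::finite \<Rightarrow> real" and T :: "('i \<Rightarrow> 'a::real_inner) \<Rightarrow> ('i \<Rightarrow> 'a)"
  assumes w0: "\<forall>i. 0 \<le> \<omega> i" and \<alpha>: "0 < \<alpha>" "\<alpha> < 1"
    and ineq: "\<And>x y. (norm (weighted_embed \<omega> (T x) - weighted_embed \<omega> (T y)))\<^sup>2
      + ((1 - \<alpha>) / \<alpha>) * (norm ((weighted_embed \<omega> x - weighted_embed \<omega> y) - (weighted_embed \<omega> (T x) - weighted_embed \<omega> (T y))))\<^sup>2
      \<le> (norm (weighted_embed \<omega> x - weighted_embed \<omega> y))\<^sup>2"
  shows "paveraged \<omega> \<alpha> T"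
proof -
  define R where "R x = (\<lambda>i. (1 / \<alpha>) *\<^sub>R (T x i - (1 - \<alpha>) *\<^sub>R x i))" for x
  have T: "T x = (\<lambda>i. (1 - \<alpha>) *\<^sub>R x i + \<alpha> *\<^sub>R R x i)" for x
    using \<alpha>(1) by (simp add: R_def fun_eq_iff)
  have "pnonexpansive \<omega> R"
    unfolding pnonexpansive_def pnorm_weighted_embed[OF w0] weighted_embed_diff[symmetric]
  proof (intro allI)
    fix x y
    let ?u = "weighted_embed \<omega> x - weighted_embed \<omega> y" and ?r = "weighted_embed \<omega> (R x) - weighted_embed \<omega> (R y)"
    have "weighted_embed \<omega> (T x) - weighted_embed \<omega> (T y) = (1 - \<alpha>) *\<^sub>R ?u + \<alpha> *\<^sub>R ?r"
      by (subst (1 2) T) (simp add: weighted_embed_def vec_eq_iff algebra_simps)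
    then have "(1 - \<alpha>) * (norm ?u)\<^sup>2 + \<alpha> * (norm ?r)\<^sup>2 \<le> (norm ?u)\<^sup>2"
      using ineq[of x y] averaged_identity[of \<alpha> ?u ?r] \<alpha> by simp
    then have "\<alpha> * (norm ?r)\<^sup>2 \<le> \<alpha> * (norm ?u)\<^sup>2" by (simp add: algebra_simps)
    then have "(norm ?r)\<^sup>2 \<le> (norm ?u)\<^sup>2" using \<alpha>(1) by simp
    then show "norm ?r \<le> norm ?u" by (rule power2_le_imp_le) simp
  qed
  with T \<alpha> show ?thesis unfolding paveraged_def by blast
qed

lemma averaging_constant:
  fixes \<beta> \<gamma> :: real
  assumes b: "0 < \<beta>" and g0: "0 < \<gamma>" and g1: "\<gamma> < 2 * \<beta>"
  defines "\<alpha> \<equiv> max (2/3) (2 / (1 + 2 * \<beta> / \<gamma>))" and "\<kappa> \<equiv> (2 * \<beta> - \<gamma>) / \<gamma>"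
  shows "0 < \<alpha>" "\<alpha> < 1" "0 < \<kappa>" "(1 - \<alpha>) / \<alpha> \<le> \<kappa> / (1 + \<kappa>)"
proof -
  have a2: "2 / (1 + 2 * \<beta> / \<gamma>) = 2 * \<gamma> / (\<gamma> + 2 * \<beta>)" using g0 b by (simp add: field_simps)
  show a0: "0 < \<alpha>" unfolding \<alpha>_def by simp
  show "\<alpha> < 1" unfolding \<alpha>_def a2 using g0 g1 b by (simp add: field_simps)
  show "0 < \<kappa>" unfolding \<kappa>_def using g0 g1 by simp
  have rhs: "\<kappa> / (1 + \<kappa>) = (4 * \<beta> - \<gamma>) / (2 * \<beta>) - 1"
    unfolding \<kappa>_def using g0 b by (simp add: field_simps)
  have lhs: "(1 - \<alpha>) / \<alpha> = 1 / \<alpha> - 1" using a0 by (simp add: field_simps)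
  have "1 / \<alpha> \<le> (4 * \<beta> - \<gamma>) / (2 * \<beta>)"
  proof (cases "\<gamma> \<le> \<beta>")
    case True
    have "1 / \<alpha> \<le> 1 / (2/3)" unfolding \<alpha>_def by (rule divide_left_mono) auto
    also have "\<dots> \<le> (4 * \<beta> - \<gamma>) / (2 * \<beta>)" using True b by (simp add: field_simps)
    finally show ?thesis .
  next
    case False
    have "1 / \<alpha> \<le> 1 / (2 * \<gamma> / (\<gamma> + 2 * \<beta>))"
      unfolding \<alpha>_def a2 using g0 b by (intro divide_left_mono) auto
    also have "\<dots> = (\<gamma> + 2 * \<beta>) / (2 * \<gamma>)" by simp
    also have "\<dots> \<le> (4 * \<beta> - \<gamma>) / (2 * \<beta>)"
    proof -
      have "0 \<le> (\<gamma> - \<beta>) * (2 * \<beta> - \<gamma>)" using False g1 by simp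
      then have "2 * \<beta> * (\<gamma> + 2 * \<beta>) \<le> 2 * \<gamma> * (4 * \<beta> - \<gamma>)" by (simp add: algebra_simps)
      then show ?thesis using g0 b by (simp add: divide_le_eq le_divide_eq mult.commute mult.left_commute)
    qed
    finally show ?thesis .
  qed
  then show "(1 - \<alpha>) / \<alpha> \<le> \<kappa> / (1 + \<kappa>)" unfolding lhs rhs by simp
qed

theorem proposition4p5:
  fixes \<omega> :: "'i::finite \<Rightarrow> real"
    and A :: "'i \<Rightarrow> 'a::{real_inner, complete_space} \<Rightarrow> 'a set"
    and B :: "'a \<Rightarrow> 'a"
    and \<beta> \<gamma> :: real
    and g :: "'i \<Rightarrow> real"
  assumes "\<forall>i. 0 < \<omega> i \<and> \<omega> i < 1"
    and "(\<Sum>i\<in>UNIV. \<omega> i) = 1"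
    and "\<forall>i. maximal_monotone (A i)"
    and "0 < \<beta>"
    and "firmly_nonexpansive (\<lambda>x. \<beta> *\<^sub>R B x)"
    and "\<forall>i. 0 < g i"
    and "0 < \<gamma>" and "\<gamma> < 2 * \<beta>"
  shows "paveraged \<omega> (max (2/3) (2 / (1 + 2 * \<beta> / \<gamma>))) (T1 \<omega> g A \<circ> T2 \<omega> \<gamma> B)"
proof -
  define \<alpha> where "\<alpha> = max (2/3) (2 / (1 + 2 * \<beta> / \<gamma>))"
  define \<kappa> where "\<kappa> = (2 * \<beta> - \<gamma>) / \<gamma>"
  have w0: "\<forall>i. 0 \<le> \<omega> i" using assms(1) by (simp add: less_imp_le)
  have \<alpha>: "0 < \<alpha>" "\<alpha> < 1" "0 < \<kappa>" "(1 - \<alpha>) / \<alpha> \<le> \<kappa> / (1 + \<kappa>)"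
    using averaging_constant[OF assms(4,7,8)] unfolding \<alpha>_def \<kappa>_def by auto
  note T1_firm = T1_firmly_nonexpansive[OF w0 assms(2,3,6)]
  note T2_coco = T2_inequality[OF w0 assms(2,4,5,7), folded \<kappa>_def]
  have "paveraged \<omega> \<alpha> (T1 \<omega> g A \<circ> T2 \<omega> \<gamma> B)"
    by (rule paveraged_if_inequality[OF w0 \<alpha>(1,2)], unfold comp_def,
        rule composition_inequality[OF T1_firm T2_coco \<alpha>(3) _ \<alpha>(4)]) (use \<alpha>(1,2) in simp)
  then show ?thesis unfolding \<alpha>_def .
qed

end
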